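(* Let $\Phi$ be a convex growth function. Then for any $z=x+iy\in \mathbb{C}_+$, the function $$f_z(w):=\Phi^{-1}\left(\frac 1y\right)\frac{y^2}{(w-\bar{z})^2},\quad w\in\mathbb{C}_+,$$ is in $H^\Phi(\mathbb{C}_+)$. Moreover, $\sup_{v>0}\int_{\mathbb{R}}\Phi(|f_z(u+iv)|)du\le \pi$.
   Context: $\mathbb{C}_+=\{x+iy: y>0\}$. A growth function is a continuous nondecreasing function from $[0,\infty)$ onto $[0,\infty)$; $\Phi^{-1}$ is its inverse. $H^\Phi(\mathbb{C}_+)$ is the space of holomorphic $f$ on $\mathbb{C}_+$ with $\sup_{y>0}\inf\{\lambda>0:\int_{\mathbb{R}}\Phi(|f(x+iy)|/\lambda)dx\le1\}<\infty$. *)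

theory Defs
  imports "HOL-Analysis.Analysis"
begin

definition upper_half_plane :: "complex set" where
  "upper_half_plane = {w. Im w > 0}"

definition growth_function :: "(real \<Rightarrow> real) \<Rightarrow> bool" where
  "growth_function \<Phi> \<longleftrightarrow> continuous_on {0..} \<Phi> \<and> mono_on {0..} \<Phi> \<and> \<Phi> ` {0..} = {0..}"

text \<open>Inverse of a growth function (uniquely determined at every t > 0 for convex growth functions).\<close>
definition growth_inv :: "(real \<Rightarrow> real) \<Rightarrow> real \<Rightarrow> real" where
  "growth_inv \<Phi> t = (THE s. s \<ge> 0 \<and> \<Phi> s = t)"

text \<open>Luxemburg quasi-norm of the horizontal slice x \<mapsto> f(x+iy); Inf of empty set is infinity.\<close>
definition slice_lux :: "(real \<Rightarrow> real) \<Rightarrow> (complex \<Rightarrow> complex) \<Rightarrow> real \<Rightarrow> ennreal" where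
  "slice_lux \<Phi> f y = Inf {ennreal c | c. c > 0 \<and>
      (\<integral>\<^sup>+ x. ennreal (\<Phi> (cmod (f (Complex x y)) / c)) \<partial>lborel) \<le> 1}"

definition hardy_orlicz :: "(real \<Rightarrow> real) \<Rightarrow> (complex \<Rightarrow> complex) set" where
  "hardy_orlicz \<Phi> = {f. f holomorphic_on upper_half_plane \<and>
      (SUP y\<in>{0<..}. slice_lux \<Phi> f y) < \<infinity>}"

end

theory Submission
  imports Defs "HOL-Probability.Sinc_Integral"
begin

text \<open>
  Write \<open>y = Im z\<close>, \<open>x = Re z\<close> and \<open>a = \<Phi>\<inverse>(1/y)\<close>. Then
  \<open>|f\<^sub>z(u + iv)| = \<lambda> a\<close> with \<open>\<lambda> = y\<^sup>2 / ((u - x)\<^sup>2 + (v + y)\<^sup>2) \<le> 1\<close>.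
  A convex \<open>\<Phi>\<close> with \<open>\<Phi> 0 = 0\<close> satisfies \<open>\<Phi>(\<lambda> a) \<le> \<lambda> \<Phi>(a) = \<lambda> / y\<close>, so
  \<open>\<Phi>(|f\<^sub>z(u + iv)| / c)\<close> is dominated, for every \<open>c \<ge> 1\<close>, by \<open>1/c\<close> times the
  Lorentzian \<open>y / ((u - x)\<^sup>2 + (v + y)\<^sup>2)\<close>, whose integral over \<open>u\<close> is
  \<open>\<pi> y / (v + y) \<le> \<pi>\<close>. Taking \<open>c = 1\<close> gives the integral bound and \<open>c = \<pi>\<close> bounds the
  Luxemburg norm of every horizontal slice by \<open>\<pi>\<close>.
\<close>

lemma nn_integral_inverse_1_plus_square:
  "(\<integral>\<^sup>+ x. ennreal (inverse (1 + x\<^sup>2)) \<partial>lborel) = ennreal pi"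
proof -
  have "integrable lborel (\<lambda>x::real. inverse (1 + x\<^sup>2))"
    using integrable_inverse_1_plus_square by (simp add: set_integrable_def)
  moreover have "(\<integral>x. inverse (1 + x\<^sup>2) \<partial>lborel) = pi"
    using LBINT_inverse_1_plus_square by (simp add: interval_lebesgue_integral_def set_lebesgue_integral_def)
  ultimately show ?thesis
    by (subst nn_integral_eq_integral) auto
qed

lemma nn_integral_inverse_lorentzian:
  fixes x s :: real
  assumes "s > 0"
  shows "(\<integral>\<^sup>+ u. ennreal (inverse ((u - x)\<^sup>2 + s\<^sup>2)) \<partial>lborel) = ennreal (pi / s)"
proof -
  have "(\<integral>\<^sup>+ u. ennreal (inverse ((u - x)\<^sup>2 + s\<^sup>2)) \<partial>lborel)
      = ennreal s * (\<integral>\<^sup>+ t. ennreal (inverse ((x + s * t - x)\<^sup>2 + s\<^sup>2)) \<partial>lborel)"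
    using assms by (subst nn_integral_real_affine[where c = s and t = x]) auto
  also have "\<dots> = ennreal s * (\<integral>\<^sup>+ t. ennreal (inverse (s\<^sup>2)) * ennreal (inverse (1 + t\<^sup>2)) \<partial>lborel)"
    using assms by (intro arg_cong2[where f = "(*)"] nn_integral_cong refl)
      (simp add: ennreal_mult'[symmetric] power_mult_distrib flip: inverse_mult_distrib, simp add: algebra_simps)
  also have "\<dots> = ennreal s * ennreal (inverse (s\<^sup>2)) * ennreal pi"
    by (simp add: nn_integral_cmult nn_integral_inverse_1_plus_square mult.assoc)
  also have "\<dots> = ennreal (pi / s)"
    using assms by (simp add: ennreal_mult'[symmetric] power2_eq_square field_simps)
  finally show ?thesis .
qed

lemma growth_function_zero:
  assumes "growth_function \<Phi>"
  shows "\<Phi> 0 = 0"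
proof -
  have mono: "mono_on {0..} \<Phi>" and onto: "\<Phi> ` {0..} = {0..}"
    using assms unfolding growth_function_def by auto
  have "0 \<in> \<Phi> ` {0..}"
    using onto by simp
  then obtain t where "t \<ge> 0" "\<Phi> t = 0"
    by auto
  moreover have "\<Phi> 0 \<ge> 0"
    using onto by auto
  ultimately show ?thesis
    using mono_onD[OF mono, of 0 t] by auto
qed

lemma convex_on_scale_le:
  fixes \<Phi> :: "real \<Rightarrow> real"
  assumes "convex_on {0..} \<Phi>" "\<Phi> 0 \<le> 0" "0 \<le> l" "l \<le> 1" "0 \<le> t"
  shows "\<Phi> (l * t) \<le> l * \<Phi> t"
proof -
  have "\<Phi> ((1 - l) *\<^sub>R 0 + l *\<^sub>R t) \<le> (1 - l) * \<Phi> 0 + l * \<Phi> t"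
    using assms by (intro convex_onD) auto
  moreover have "(1 - l) * \<Phi> 0 \<le> 0"
    using assms by (simp add: mult_nonneg_nonpos)
  ultimately show ?thesis
    by simp
qed

lemma convex_on_less_above_zero:
  fixes \<Phi> :: "real \<Rightarrow> real"
  assumes "convex_on {0..} \<Phi>" "\<Phi> 0 \<le> 0" "0 \<le> a" "a < b" "0 < \<Phi> b"
  shows "\<Phi> a < \<Phi> b"
proof -
  have "\<Phi> a = \<Phi> (a / b * b)"
    using assms by simp
  also have "\<dots> \<le> a / b * \<Phi> b"
    using assms by (intro convex_on_scale_le) auto
  also have "\<dots> < 1 * \<Phi> b"
    using assms by (intro mult_strict_right_mono) auto
  finally show ?thesis
    by simp
qed

lemma
  assumes "growth_function \<Phi>" "convex_on {0..} \<Phi>" "t > 0"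
  shows growth_inv_nonneg: "growth_inv \<Phi> t \<ge> 0"
    and growth_inv_inverse: "\<Phi> (growth_inv \<Phi> t) = t"
proof -
  have zero: "\<Phi> 0 \<le> 0"
    using growth_function_zero[OF assms(1)] by simp
  have "t \<in> \<Phi> ` {0..}"
    using assms(1,3) unfolding growth_function_def by auto
  then obtain s where s: "s \<ge> 0" "\<Phi> s = t"
    by auto
  have unique: "r = s" if r: "r \<ge> 0" "\<Phi> r = t" for r
  proof (cases r s rule: linorder_cases)
    case less
    then have "\<Phi> r < \<Phi> s"
      using r s assms(3) by (intro convex_on_less_above_zero[OF assms(2) zero]) auto
    then show ?thesis
      using r s by simp
  next
    case equal
    then show ?thesis .
  next
    case greater
    then have "\<Phi> s < \<Phi> r"
      using r s assms(3) by (intro convex_on_less_above_zero[OF assms(2) zero]) auto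
    then show ?thesis
      using r s by simp
  qed
  have "growth_inv \<Phi> t = s"
    unfolding growth_inv_def using s unique by (intro the_equality) blast+
  then show "growth_inv \<Phi> t \<ge> 0" "\<Phi> (growth_inv \<Phi> t) = t"
    using s by simp_all
qed

definition hardy_orlicz_kernel :: "(real \<Rightarrow> real) \<Rightarrow> complex \<Rightarrow> complex \<Rightarrow> complex" where
  "hardy_orlicz_kernel \<Phi> z w = complex_of_real (growth_inv \<Phi> (1 / Im z)) * (Im z)\<^sup>2 / (w - cnj z)\<^sup>2"

lemma hardy_orlicz_kernel_holomorphic:
  assumes "Im z > 0"
  shows "hardy_orlicz_kernel \<Phi> z holomorphic_on upper_half_plane"
  unfolding hardy_orlicz_kernel_def[abs_def]
proof (intro holomorphic_intros)
  fix w assume "w \<in> upper_half_plane"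
  then have "Im (w - cnj z) > 0"
    using assms by (simp add: upper_half_plane_def)
  then show "(w - cnj z)\<^sup>2 \<noteq> 0"
    by auto
qed

lemma norm_hardy_orlicz_kernel:
  "cmod (hardy_orlicz_kernel \<Phi> z w)
     = \<bar>growth_inv \<Phi> (1 / Im z)\<bar> * (Im z)\<^sup>2 / ((Re w - Re z)\<^sup>2 + (Im w + Im z)\<^sup>2)"
proof -
  have "cmod ((w - cnj z)\<^sup>2) = (Re w - Re z)\<^sup>2 + (Im w + Im z)\<^sup>2"
    by (simp add: norm_power cmod_power2)
  then show ?thesis
    by (simp add: hardy_orlicz_kernel_def norm_divide norm_mult norm_power)
qed

lemma Phi_hardy_orlicz_kernel_le:
  assumes \<Phi>: "growth_function \<Phi>" "convex_on {0..} \<Phi>"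
    and "Im z > 0" "Im w \<ge> 0" "c \<ge> 1"
  shows "\<Phi> (cmod (hardy_orlicz_kernel \<Phi> z w) / c)
           \<le> Im z / c * inverse ((Re w - Re z)\<^sup>2 + (Im w + Im z)\<^sup>2)"
proof -
  define a where "a = growth_inv \<Phi> (1 / Im z)"
  define D where "D = (Re w - Re z)\<^sup>2 + (Im w + Im z)\<^sup>2"
  define l where "l = (Im z)\<^sup>2 / (c * D)"
  have a: "a \<ge> 0" "\<Phi> a = 1 / Im z"
    unfolding a_def using growth_inv_nonneg[OF \<Phi>] growth_inv_inverse[OF \<Phi>] assms by auto
  have y2: "0 < (Im z)\<^sup>2"
    using assms by simp
  have "(Im z)\<^sup>2 \<le> (Im w + Im z)\<^sup>2"
    using assms by (intro power_mono) auto
  also have "\<dots> \<le> D"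
    unfolding D_def by simp
  finally have "(Im z)\<^sup>2 \<le> D" .
  with y2 have "0 < D"
    by linarith
  have "1 * D \<le> c * D"
    using assms \<open>0 < D\<close> by (intro mult_right_mono) auto
  with \<open>(Im z)\<^sup>2 \<le> D\<close> have "(Im z)\<^sup>2 \<le> c * D"
    by linarith
  then have "0 \<le> l" "l \<le> 1"
    unfolding l_def using assms \<open>0 < D\<close> by auto
  have "cmod (hardy_orlicz_kernel \<Phi> z w) = a * (Im z)\<^sup>2 / D"
    using norm_hardy_orlicz_kernel[of \<Phi> z w, folded a_def D_def] a(1) by simp
  then have "cmod (hardy_orlicz_kernel \<Phi> z w) / c = l * a"
    unfolding l_def by (simp add: ac_simps)
  then have "\<Phi> (cmod (hardy_orlicz_kernel \<Phi> z w) / c) \<le> l * \<Phi> a"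
    using convex_on_scale_le[OF \<Phi>(2) _ \<open>0 \<le> l\<close> \<open>l \<le> 1\<close> a(1)] growth_function_zero[OF \<Phi>(1)]
    by simp
  also have "\<dots> = Im z / c * inverse D"
    unfolding l_def a(2) using assms by (simp add: field_simps power2_eq_square)
  finally show ?thesis
    unfolding D_def .
qed

lemma nn_integral_Phi_hardy_orlicz_kernel_le:
  assumes \<Phi>: "growth_function \<Phi>" "convex_on {0..} \<Phi>"
    and "Im z > 0" "v \<ge> 0" "c \<ge> 1"
  shows "(\<integral>\<^sup>+ u. ennreal (\<Phi> (cmod (hardy_orlicz_kernel \<Phi> z (Complex u v)) / c)) \<partial>lborel)
           \<le> ennreal (pi / c)"
proof -
  have "(\<integral>\<^sup>+ u. ennreal (\<Phi> (cmod (hardy_orlicz_kernel \<Phi> z (Complex u v)) / c)) \<partial>lborel)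
      \<le> (\<integral>\<^sup>+ u. ennreal (Im z / c) * ennreal (inverse ((u - Re z)\<^sup>2 + (v + Im z)\<^sup>2)) \<partial>lborel)"
    using Phi_hardy_orlicz_kernel_le[OF \<Phi>, of z "Complex u v" c for u] assms
    by (intro nn_integral_mono) (simp add: ennreal_mult'[symmetric] ennreal_leI)
  also have "\<dots> = ennreal (Im z / c) * ennreal (pi / (v + Im z))"
    using assms by (simp add: nn_integral_cmult nn_integral_inverse_lorentzian)
  also have "\<dots> = ennreal (pi / c * (Im z / (v + Im z)))"
    using assms by (simp add: ennreal_mult'[symmetric])
  also have "\<dots> \<le> ennreal (pi / c)"
    using assms by (intro ennreal_leI mult_left_le) auto
  finally show ?thesis .
qed

lemma slice_lux_le:
  assumes "c > 0" "(\<integral>\<^sup>+ x. ennreal (\<Phi> (cmod (f (Complex x y)) / c)) \<partial>lborel) \<le> 1"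
  shows "slice_lux \<Phi> f y \<le> ennreal c"
  unfolding slice_lux_def using assms by (intro Inf_lower) blast

lemma hardy_orlicz_kernel_in_hardy_orlicz:
  assumes \<Phi>: "growth_function \<Phi>" "convex_on {0..} \<Phi>" and "Im z > 0"
  shows "hardy_orlicz_kernel \<Phi> z \<in> hardy_orlicz \<Phi>"
proof -
  have "slice_lux \<Phi> (hardy_orlicz_kernel \<Phi> z) v \<le> ennreal pi" if "v > 0" for v
  proof (rule slice_lux_le)
    show "(\<integral>\<^sup>+ u. ennreal (\<Phi> (cmod (hardy_orlicz_kernel \<Phi> z (Complex u v)) / pi)) \<partial>lborel) \<le> 1"
      using nn_integral_Phi_hardy_orlicz_kernel_le[OF \<Phi> \<open>Im z > 0\<close>, of v pi] that pi_ge_two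
      by simp
  qed simp
  then have "(SUP v\<in>{0<..}. slice_lux \<Phi> (hardy_orlicz_kernel \<Phi> z) v) \<le> ennreal pi"
    by (intro SUP_least) simp
  also have "\<dots> < \<infinity>"
    by simp
  finally show ?thesis
    using hardy_orlicz_kernel_holomorphic[OF \<open>Im z > 0\<close>] unfolding hardy_orlicz_def by simp
qed

lemma SUP_nn_integral_Phi_hardy_orlicz_kernel_le:
  assumes \<Phi>: "growth_function \<Phi>" "convex_on {0..} \<Phi>" and "Im z > 0"
  shows "(SUP v\<in>{0<..}. \<integral>\<^sup>+ u. ennreal (\<Phi> (cmod (hardy_orlicz_kernel \<Phi> z (Complex u v)))) \<partial>lborel)
           \<le> ennreal pi"
  using nn_integral_Phi_hardy_orlicz_kernel_le[OF assms, of _ 1] by (intro SUP_least) simp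

theorem lemma3p8:
  fixes \<Phi> :: "real \<Rightarrow> real" and z :: complex
  assumes "growth_function \<Phi>" and "convex_on {0..} \<Phi>" and "Im z > 0"
  shows "(\<lambda>w. complex_of_real (growth_inv \<Phi> (1 / Im z)) * (Im z)\<^sup>2 / (w - cnj z)\<^sup>2)
           \<in> hardy_orlicz \<Phi>
       \<and> (SUP v\<in>{0<..}. \<integral>\<^sup>+ u. ennreal (\<Phi> (cmod (complex_of_real (growth_inv \<Phi> (1 / Im z))
              * (Im z)\<^sup>2 / (Complex u v - cnj z)\<^sup>2))) \<partial>lborel) \<le> ennreal pi"
  using hardy_orlicz_kernel_in_hardy_orlicz[OF assms]
    SUP_nn_integral_Phi_hardy_orlicz_kernel_le[OF assms]
  unfolding hardy_orlicz_kernel_def by simp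

end
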